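(* If the set of all Diophantine equations which have a solution in non-negative integers is not recursive, then the set of all Diophantine equations which have at most finitely many solutions in non-negative integers is not recursively enumerable.
   Context: A Diophantine equation is an equation $D(x_1,\ldots,x_n)=0$ with $D\in\mathbb Z[x_1,\ldots,x_n]$; such equations are coded as natural numbers so that recursiveness and recursive enumerability of sets of them make sense. Solutions in non-negative integers are tuples in $\mathbb N^n$, $\mathbb N=\{0,1,2,\ldots\}$. *)

theory Defs
  imports Main "HOL-Library.Nat_Bijection"
begin

datatype recf = Z | S | Proj nat | Comp recf "recf list" | Prim recf recf | Mn recf

inductive eval :: "recf \<Rightarrow> nat list \<Rightarrow> nat \<Rightarrow> bool" where
  eval_Z: "eval Z xs 0"
| eval_S: "eval S (x # xs) (Suc x)"
| eval_Proj: "i < length xs \<Longrightarrow> eval (Proj i) xs (xs ! i)"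
| eval_Comp: "list_all2 (\<lambda>g y. eval g xs y) gs ys \<Longrightarrow> eval f ys z \<Longrightarrow> eval (Comp f gs) xs z"
| eval_Prim0: "eval f xs y \<Longrightarrow> eval (Prim f g) (0 # xs) y"
| eval_PrimS: "eval (Prim f g) (n # xs) y \<Longrightarrow> eval g (n # y # xs) z
               \<Longrightarrow> eval (Prim f g) (Suc n # xs) z"
| eval_Mn: "eval g (n # xs) 0 \<Longrightarrow> (\<forall>m<n. \<exists>y. y > 0 \<and> eval g (m # xs) y)
               \<Longrightarrow> eval (Mn g) xs n"

definition recursive_set :: "nat set \<Rightarrow> bool" where
  "recursive_set A \<longleftrightarrow> (\<exists>f. \<forall>x. eval f [x] (if x \<in> A then 1 else 0))"

definition re_set :: "nat set \<Rightarrow> bool" where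
  "re_set A \<longleftrightarrow> (\<exists>f. \<forall>x. x \<in> A \<longleftrightarrow> (\<exists>y. eval f [x] y))"

datatype dterm = Var nat | Const int | Add dterm dterm | Mul dterm dterm

fun dval :: "(nat \<Rightarrow> nat) \<Rightarrow> dterm \<Rightarrow> int" where
  "dval x (Var i) = int (x i)"
| "dval x (Const c) = c"
| "dval x (Add a b) = dval x a + dval x b"
| "dval x (Mul a b) = dval x a * dval x b"

fun vars :: "dterm \<Rightarrow> nat set" where
  "vars (Var i) = {i}"
| "vars (Const c) = {}"
| "vars (Add a b) = vars a \<union> vars b"
| "vars (Mul a b) = vars a \<union> vars b"

fun enc :: "dterm \<Rightarrow> nat" where
  "enc (Var i) = 4 * i"
| "enc (Const c) = 4 * int_encode c + 1"
| "enc (Add a b) = 4 * prod_encode (enc a, enc b) + 2"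
| "enc (Mul a b) = 4 * prod_encode (enc a, enc b) + 3"

text \<open>A Diophantine equation D(x_0,...,x_{n-1}) = 0 is a pair (n, D) with all variables of D
  below n; its code is prod_encode (n, enc D).\<close>
definition dioph_eq :: "nat \<Rightarrow> dterm \<Rightarrow> bool" where
  "dioph_eq n D \<longleftrightarrow> vars D \<subseteq> {..<n}"

definition code :: "nat \<Rightarrow> dterm \<Rightarrow> nat" where
  "code n D = prod_encode (n, enc D)"

text \<open>Solutions in N^n, represented canonically as functions vanishing outside {..<n}.\<close>
definition solutions :: "nat \<Rightarrow> dterm \<Rightarrow> (nat \<Rightarrow> nat) set" where
  "solutions n D = {x. (\<forall>i\<ge>n. x i = 0) \<and> dval x D = 0}"

definition Solvable :: "nat set" where
  "Solvable = {code n D | n D. dioph_eq n D \<and> solutions n D \<noteq> {}}"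

definition FinitelySolvable :: "nat set" where
  "FinitelySolvable = {code n D | n D. dioph_eq n D \<and> finite (solutions n D)}"

end

theory Submission
  imports Defs
begin

text \<open>Giving an equation in \<open>n\<close> unknowns a dummy unknown \<open>x\<^sub>n\<close> turns one solution into
  infinitely many and leaves no solution as none; so \<open>D\<close> is unsolvable iff its dummy extension
  has finitely many solutions. An enumeration of the finitely solvable equations thus enumerates the
  unsolvable ones, while the solvable ones are enumerated by searching for a solution; running both
  searches side by side decides solvability. Formally both searches have to be realised as
  recursive-function terms: halting of a fixed term within a given number of steps is primitive
  recursive (via a clocked evaluator), and so is evaluating a coded polynomial at a coded point
  (via course-of-values recursion over codes).\<close>

section \<open>Total functions computed by recursive-function terms\<close>

definition computes :: "nat \<Rightarrow> recf \<Rightarrow> (nat list \<Rightarrow> nat) \<Rightarrow> bool" where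
  "computes a F f \<longleftrightarrow> (\<forall>xs. length xs = a \<longrightarrow> eval F xs (f xs))"

lemma computes_cong:
  "computes a F f \<Longrightarrow> (\<And>xs. length xs = a \<Longrightarrow> f xs = g xs) \<Longrightarrow> computes a F g"
  by (simp add: computes_def)

lemma computes_Z: "computes a Z (\<lambda>_. 0)"
  by (simp add: computes_def eval_Z)

lemma computes_Proj: "i < a \<Longrightarrow> computes a (Proj i) (\<lambda>xs. xs ! i)"
  by (simp add: computes_def eval_Proj)

lemma computes_Comp:
  assumes "computes (length gs) F f" and "list_all2 (\<lambda>G g. computes a G g) Gs gs"
  shows "computes a (Comp F Gs) (\<lambda>xs. f (map (\<lambda>g. g xs) gs))"
  unfolding computes_def
proof (intro allI impI)
  fix xs :: "nat list" assume "length xs = a"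
  with assms(2) have "list_all2 (\<lambda>G y. eval G xs y) Gs (map (\<lambda>g. g xs) gs)"
    by (auto simp: list_all2_conv_all_nth computes_def)
  with assms(1) show "eval (Comp F Gs) xs (f (map (\<lambda>g. g xs) gs))"
    by (auto simp: computes_def intro: eval_Comp)
qed

lemma computes_CompI:
  assumes "computes n F f" and "length gs = n" and "list_all2 (\<lambda>G g. computes a G g) Gs gs"
    and "\<And>xs. length xs = a \<Longrightarrow> h xs = f (map (\<lambda>g. g xs) gs)"
  shows "computes a (Comp F Gs) h"
  using computes_cong[OF computes_Comp[of gs F f a Gs]] assms by simp

lemma computes_Comp1:
  "computes (Suc 0) F f \<Longrightarrow> computes a G g \<Longrightarrow> computes a (Comp F [G]) (\<lambda>xs. f [g xs])"
  using computes_Comp[of "[g]" F f a "[G]"] by simp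

lemma computes_Comp2:
  "computes (Suc (Suc 0)) F f \<Longrightarrow> computes a G g \<Longrightarrow> computes a H h \<Longrightarrow>
   computes a (Comp F [G, H]) (\<lambda>xs. f [g xs, h xs])"
  using computes_Comp[of "[g, h]" F f a "[G, H]"] by simp

lemma computes_Comp3:
  "computes (Suc (Suc (Suc 0))) F f \<Longrightarrow> computes a G g \<Longrightarrow> computes a H h \<Longrightarrow> computes a K k \<Longrightarrow>
   computes a (Comp F [G, H, K]) (\<lambda>xs. f [g xs, h xs, k xs])"
  using computes_Comp[of "[g, h, k]" F f a "[G, H, K]"] by simp

lemma computes_projs:
  "\<forall>i\<in>set is. i < a \<Longrightarrow> list_all2 (\<lambda>G g. computes a G g) (map Proj is) (map (\<lambda>i xs. xs ! i) is)"
  by (induction "is") (auto intro: computes_Proj)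

lemma computes_S: "computes a G g \<Longrightarrow> computes a (Comp S [G]) (\<lambda>xs. Suc (g xs))"
  by (auto simp: computes_def intro: eval_Comp eval_S)

lemma computes_Prim:
  assumes F: "computes a F f" and G: "computes (Suc (Suc a)) G g"
    and h0: "\<And>ys. length ys = a \<Longrightarrow> h (0 # ys) = f ys"
    and hSuc: "\<And>n ys. length ys = a \<Longrightarrow> h (Suc n # ys) = g (n # h (n # ys) # ys)"
  shows "computes (Suc a) (Prim F G) h"
  unfolding computes_def
proof (intro allI impI)
  fix xs :: "nat list" assume "length xs = Suc a"
  then obtain n ys where xs: "xs = n # ys" and ys: "length ys = a" by (cases xs) auto
  have "eval (Prim F G) (m # ys) (h (m # ys))" for m
  proof (induction m)
    case 0
    show ?case using F ys by (simp add: computes_def h0 eval_Prim0)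
  next
    case (Suc m)
    with G ys show ?case by (simp add: computes_def hSuc eval_PrimS)
  qed
  then show "eval (Prim F G) xs (h xs)" by (simp add: xs)
qed

lemma computes_Mn:
  assumes G: "computes (Suc a) G g" and total: "\<And>xs. length xs = a \<Longrightarrow> \<exists>n. g (n # xs) = 0"
  shows "computes a (Mn G) (\<lambda>xs. LEAST n. g (n # xs) = 0)"
  unfolding computes_def
proof (intro allI impI)
  fix xs :: "nat list" assume xs: "length xs = a"
  let ?n = "LEAST n. g (n # xs) = 0"
  have "g (?n # xs) = 0" using total[OF xs] by (rule LeastI_ex)
  with G xs have "eval G (?n # xs) 0" by (metis computes_def length_Cons)
  moreover have "\<exists>y>0. eval G (m # xs) y" if "m < ?n" for m
    using not_less_Least[OF that] G xs by (auto simp: computes_def)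
  ultimately show "eval (Mn G) xs ?n" by (blast intro: eval_Mn)
qed

section \<open>Arithmetic and pairing functions\<close>

definition r_const :: "nat \<Rightarrow> recf" where
  "r_const c = ((\<lambda>G. Comp S [G]) ^^ c) Z"

lemma computes_const: "computes a (r_const c) (\<lambda>_. c)"
  by (induction c) (auto simp: r_const_def computes_Z dest: computes_S)

definition r_add :: "recf \<Rightarrow> recf \<Rightarrow> recf" where
  "r_add G H = Comp (Prim (Proj 0) (Comp S [Proj 1])) [G, H]"

lemma computes_add: "computes a G g \<Longrightarrow> computes a H h \<Longrightarrow> computes a (r_add G H) (\<lambda>xs. g xs + h xs)"
proof -
  have "computes (Suc (Suc 0)) (Prim (Proj 0) (Comp S [Proj 1])) (\<lambda>xs. xs ! 0 + xs ! 1)"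
    by (rule computes_Prim[where g = "\<lambda>zs. Suc (zs ! 1)"]) (rule computes_Proj computes_S | simp)+
  then show "computes a G g \<Longrightarrow> computes a H h \<Longrightarrow> ?thesis"
    unfolding r_add_def using computes_Comp2 by fastforce
qed

definition r_mul :: "recf \<Rightarrow> recf \<Rightarrow> recf" where
  "r_mul G H = Comp (Prim Z (r_add (Proj 1) (Proj 2))) [G, H]"

lemma computes_mul: "computes a G g \<Longrightarrow> computes a H h \<Longrightarrow> computes a (r_mul G H) (\<lambda>xs. g xs * h xs)"
proof -
  have "computes (Suc (Suc 0)) (Prim Z (r_add (Proj 1) (Proj 2))) (\<lambda>xs. xs ! 0 * xs ! 1)"
    by (rule computes_Prim[where g = "\<lambda>zs. zs ! 1 + zs ! 2"])
      (rule computes_Proj computes_Z computes_add | simp)+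
  then show "computes a G g \<Longrightarrow> computes a H h \<Longrightarrow> ?thesis"
    unfolding r_mul_def using computes_Comp2 by fastforce
qed

definition r_pred :: "recf \<Rightarrow> recf" where
  "r_pred G = Comp (Prim Z (Proj 0)) [G]"

lemma computes_pred: "computes a G g \<Longrightarrow> computes a (r_pred G) (\<lambda>xs. g xs - 1)"
proof -
  have "computes (Suc 0) (Prim Z (Proj 0)) (\<lambda>xs. xs ! 0 - 1)"
    by (rule computes_Prim[where g = "\<lambda>zs. zs ! 0"]) (rule computes_Proj computes_Z | simp)+
  then show "computes a G g \<Longrightarrow> ?thesis"
    unfolding r_pred_def using computes_Comp1 by fastforce
qed

definition r_sub :: "recf \<Rightarrow> recf \<Rightarrow> recf" where
  "r_sub G H = Comp (Prim (Proj 0) (r_pred (Proj 1))) [H, G]"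

lemma computes_sub: "computes a G g \<Longrightarrow> computes a H h \<Longrightarrow> computes a (r_sub G H) (\<lambda>xs. g xs - h xs)"
proof -
  have "computes (Suc (Suc 0)) (Prim (Proj 0) (r_pred (Proj 1))) (\<lambda>xs. xs ! 1 - xs ! 0)"
    by (rule computes_Prim[where g = "\<lambda>zs. zs ! 1 - 1"]) (rule computes_Proj computes_pred | simp)+
  then show "computes a G g \<Longrightarrow> computes a H h \<Longrightarrow> ?thesis"
    unfolding r_sub_def using computes_Comp2 by fastforce
qed

definition r_sgn :: "recf \<Rightarrow> recf" where
  "r_sgn G = r_sub (r_const 1) (r_sub (r_const 1) G)"

lemma computes_sgn: "computes a G g \<Longrightarrow> computes a (r_sgn G) (\<lambda>xs. if g xs = 0 then 0 else 1)"
  unfolding r_sgn_def by (rule computes_cong, (rule computes_sub computes_const)+) auto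

definition r_cond :: "recf \<Rightarrow> recf \<Rightarrow> recf \<Rightarrow> recf" where
  "r_cond C G H = r_add (r_mul (r_sub (r_const 1) C) G) (r_mul (r_sgn C) H)"

lemma computes_cond:
  "computes a C c \<Longrightarrow> computes a G g \<Longrightarrow> computes a H h \<Longrightarrow>
   computes a (r_cond C G H) (\<lambda>xs. if c xs = 0 then g xs else h xs)"
  unfolding r_cond_def
  by (rule computes_cong, (rule computes_sub computes_const computes_add computes_mul computes_sgn
      | assumption)+) auto

definition r_le :: "recf \<Rightarrow> recf \<Rightarrow> recf" where
  "r_le G H = r_sub (r_const 1) (r_sub G H)"

lemma computes_le:
  "computes a G g \<Longrightarrow> computes a H h \<Longrightarrow> computes a (r_le G H) (\<lambda>xs. if g xs \<le> h xs then 1 else 0)"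
  unfolding r_le_def by (rule computes_cong, (rule computes_sub computes_const | assumption)+) auto

definition r_mod :: "nat \<Rightarrow> recf \<Rightarrow> recf" where
  "r_mod k G = Comp (Prim Z (r_mul (Comp S [Proj 1]) (r_le (Comp S [Proj 1]) (r_const (k - 1))))) [G]"

lemma computes_mod:
  assumes "0 < k" shows "computes a G g \<Longrightarrow> computes a (r_mod k G) (\<lambda>xs. g xs mod k)"
proof -
  have "Suc n mod k = Suc (n mod k) * (if Suc (n mod k) \<le> k - 1 then 1 else 0)" for n
    using mod_less_divisor[OF assms, of n] by (auto simp: mod_Suc)
  then have "computes (Suc 0) (Prim Z (r_mul (Comp S [Proj 1]) (r_le (Comp S [Proj 1]) (r_const (k - 1)))))
      (\<lambda>xs. xs ! 0 mod k)"
    by (intro computes_Prim[where g = "\<lambda>zs. Suc (zs ! 1) * (if Suc (zs ! 1) \<le> k - 1 then 1 else 0)"])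
      (rule computes_Proj computes_Z computes_S computes_mul computes_le computes_const | simp)+
  then show "computes a G g \<Longrightarrow> ?thesis"
    unfolding r_mod_def using computes_Comp1 by fastforce
qed

definition r_div :: "nat \<Rightarrow> recf \<Rightarrow> recf" where
  "r_div k G = Comp (Prim Z (r_add (Proj 1) (r_sub (r_const 1)
      (r_le (Comp S [r_mod k (Proj 0)]) (r_const (k - 1)))))) [G]"

lemma computes_div:
  assumes "0 < k" shows "computes a G g \<Longrightarrow> computes a (r_div k G) (\<lambda>xs. g xs div k)"
proof -
  have "Suc n div k = n div k + (1 - (if Suc (n mod k) \<le> k - 1 then 1 else 0))" for n
  proof -
    have "Suc (n mod k) \<le> k - 1 \<longleftrightarrow> Suc (n mod k) \<noteq> k"
      using mod_less_divisor[OF assms, of n] by linarith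
    then show ?thesis by (simp add: div_Suc mod_Suc)
  qed
  then have "computes (Suc 0) (Prim Z (r_add (Proj 1) (r_sub (r_const 1)
      (r_le (Comp S [r_mod k (Proj 0)]) (r_const (k - 1)))))) (\<lambda>xs. xs ! 0 div k)"
    by (intro computes_Prim[where g = "\<lambda>zs. zs ! 1 + (1 - (if Suc (zs ! 0 mod k) \<le> k - 1 then 1 else 0))"])
      (rule computes_Proj computes_Z computes_S computes_add computes_sub computes_le computes_const
        computes_mod[OF assms] | simp)+
  then show "computes a G g \<Longrightarrow> ?thesis"
    unfolding r_div_def using computes_Comp1 by fastforce
qed

definition r_triangle :: "recf \<Rightarrow> recf" where
  "r_triangle G = Comp (Prim Z (r_add (Proj 1) (Comp S [Proj 0]))) [G]"

lemma computes_triangle: "computes a G g \<Longrightarrow> computes a (r_triangle G) (\<lambda>xs. triangle (g xs))"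
proof -
  have "computes (Suc 0) (Prim Z (r_add (Proj 1) (Comp S [Proj 0]))) (\<lambda>xs. triangle (xs ! 0))"
    by (rule computes_Prim[where g = "\<lambda>zs. zs ! 1 + Suc (zs ! 0)"])
      (rule computes_Proj computes_Z computes_S computes_add | simp)+
  then show "computes a G g \<Longrightarrow> ?thesis"
    unfolding r_triangle_def using computes_Comp1 by fastforce
qed

definition r_prod_encode :: "recf \<Rightarrow> recf \<Rightarrow> recf" where
  "r_prod_encode G H = r_add (r_triangle (r_add G H)) G"

lemma computes_prod_encode:
  "computes a G g \<Longrightarrow> computes a H h \<Longrightarrow> computes a (r_prod_encode G H) (\<lambda>xs. prod_encode (g xs, h xs))"
  unfolding r_prod_encode_def prod_encode_def
  by (rule computes_cong, (rule computes_add computes_triangle | assumption)+) auto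

fun triangle_root :: "nat \<Rightarrow> nat" where
  "triangle_root 0 = 0"
| "triangle_root (Suc z) = triangle_root z + (if triangle (Suc (triangle_root z)) \<le> Suc z then 1 else 0)"

lemma triangle_root_bounds: "triangle (triangle_root z) \<le> z \<and> z < triangle (Suc (triangle_root z))"
  by (induction z) auto

lemma prod_decode_triangle_root:
  "prod_decode z = (z - triangle (triangle_root z), triangle_root z - (z - triangle (triangle_root z)))"
proof -
  let ?s = "triangle_root z" and ?m = "z - triangle (triangle_root z)"
  have z: "z = triangle ?s + ?m" and m: "?m \<le> ?s" using triangle_root_bounds[of z] by auto
  have "prod_decode z = prod_decode_aux ?s ?m" using prod_decode_triangle_add z by metis
  also have "\<dots> = (?m, ?s - ?m)" using m by (simp add: prod_decode_aux.simps)
  finally show ?thesis .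
qed

definition r_triangle_root :: "recf \<Rightarrow> recf" where
  "r_triangle_root G = Comp (Prim Z (r_add (Proj 1)
      (r_le (r_triangle (Comp S [Proj 1])) (Comp S [Proj 0])))) [G]"

lemma computes_triangle_root:
  "computes a G g \<Longrightarrow> computes a (r_triangle_root G) (\<lambda>xs. triangle_root (g xs))"
proof -
  have "computes (Suc 0) (Prim Z (r_add (Proj 1) (r_le (r_triangle (Comp S [Proj 1])) (Comp S [Proj 0]))))
      (\<lambda>xs. triangle_root (xs ! 0))"
    by (rule computes_Prim[where
          g = "\<lambda>zs. zs ! 1 + (if triangle (Suc (zs ! 1)) \<le> Suc (zs ! 0) then 1 else 0)"])
      (rule computes_Proj computes_Z computes_S computes_add computes_le computes_triangle | simp)+
  then show "computes a G g \<Longrightarrow> ?thesis"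
    unfolding r_triangle_root_def using computes_Comp1 by fastforce
qed

definition decode_fst :: "nat \<Rightarrow> nat" where
  "decode_fst z = fst (prod_decode z)"

definition decode_snd :: "nat \<Rightarrow> nat" where
  "decode_snd z = snd (prod_decode z)"

lemma decode_fst_prod_encode [simp]: "decode_fst (prod_encode (a, b)) = a"
  and decode_snd_prod_encode [simp]: "decode_snd (prod_encode (a, b)) = b"
  by (simp_all add: decode_fst_def decode_snd_def)

lemma prod_encode_decode: "prod_encode (decode_fst z, decode_snd z) = z"
  by (simp add: decode_fst_def decode_snd_def)

lemma decode_fst_le: "decode_fst z \<le> z" and decode_snd_le: "decode_snd z \<le> z"
  by (metis prod_encode_decode le_prod_encode_1 le_prod_encode_2)+

definition r_decode_fst :: "recf \<Rightarrow> recf" where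
  "r_decode_fst G = r_sub G (r_triangle (r_triangle_root G))"

definition r_decode_snd :: "recf \<Rightarrow> recf" where
  "r_decode_snd G = r_sub (r_triangle_root G) (r_decode_fst G)"

lemma computes_decode_fst: "computes a G g \<Longrightarrow> computes a (r_decode_fst G) (\<lambda>xs. decode_fst (g xs))"
  unfolding r_decode_fst_def decode_fst_def
  by (rule computes_cong, (rule computes_sub computes_triangle computes_triangle_root | assumption)+)
    (simp add: prod_decode_triangle_root)

lemma computes_decode_snd: "computes a G g \<Longrightarrow> computes a (r_decode_snd G) (\<lambda>xs. decode_snd (g xs))"
  unfolding r_decode_snd_def
  by (rule computes_cong, (rule computes_sub computes_decode_fst computes_triangle_root | assumption)+)
    (simp add: prod_decode_triangle_root decode_fst_def decode_snd_def)

definition r_iter_decode_snd :: "recf \<Rightarrow> recf \<Rightarrow> recf" where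
  "r_iter_decode_snd I T = Comp (Prim (Proj 0) (r_decode_snd (Proj 1))) [I, T]"

lemma computes_iter_decode_snd:
  "computes a I i \<Longrightarrow> computes a T t \<Longrightarrow>
   computes a (r_iter_decode_snd I T) (\<lambda>xs. (decode_snd ^^ i xs) (t xs))"
proof -
  have "computes (Suc (Suc 0)) (Prim (Proj 0) (r_decode_snd (Proj 1))) (\<lambda>xs. (decode_snd ^^ (xs ! 0)) (xs ! 1))"
    by (rule computes_Prim[where g = "\<lambda>zs. decode_snd (zs ! 1)"])
      (rule computes_Proj computes_decode_snd | simp)+
  then show "computes a I i \<Longrightarrow> computes a T t \<Longrightarrow> ?thesis"
    unfolding r_iter_decode_snd_def using computes_Comp2 by fastforce
qed

section \<open>Deciding a set by two searches\<close>

lemma some_search_succeeds: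
  fixes p q :: "nat \<Rightarrow> nat \<Rightarrow> nat"
  assumes in_A: "\<And>x. x \<in> A \<longleftrightarrow> (\<exists>s. p s x = 0)"
    and not_in_A: "\<And>x. x \<notin> A \<longleftrightarrow> (\<exists>s. q s x = 0)"
  shows "\<exists>s. p s x * q s x = 0"
proof (cases "x \<in> A")
  case True
  then obtain s where "p s x = 0" using in_A by blast
  then show ?thesis by (intro exI[of _ s]) simp
next
  case False
  then obtain s where "q s x = 0" using not_in_A by blast
  then show ?thesis by (intro exI[of _ s]) simp
qed

lemma first_witness_decides:
  fixes p q :: "nat \<Rightarrow> nat \<Rightarrow> nat"
  assumes in_A: "\<And>x. x \<in> A \<longleftrightarrow> (\<exists>s. p s x = 0)"
    and not_in_A: "\<And>x. x \<notin> A \<longleftrightarrow> (\<exists>s. q s x = 0)"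
  shows "1 - p (LEAST s. p s x * q s x = 0) x = (if x \<in> A then 1 else 0)"
proof -
  define s where "s = (LEAST s. p s x * q s x = 0)"
  have "p s x * q s x = 0"
    unfolding s_def using some_search_succeeds[OF in_A not_in_A] by (rule LeastI_ex)
  moreover have "q s x \<noteq> 0" if "x \<in> A" using that not_in_A by metis
  moreover have "p s x \<noteq> 0" if "x \<notin> A" using that in_A by metis
  ultimately have "1 - p s x = (if x \<in> A then 1 else 0)" by auto
  then show ?thesis by (simp only: s_def)
qed

lemma recursive_setI_two_searches:
  assumes P: "computes (Suc (Suc 0)) P (\<lambda>zs. p (zs ! 0) (zs ! 1))"
    and Q: "computes (Suc (Suc 0)) Q (\<lambda>zs. q (zs ! 0) (zs ! 1))"
    and in_A: "\<And>x. x \<in> A \<longleftrightarrow> (\<exists>s. p s x = 0)"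
    and not_in_A: "\<And>x. x \<notin> A \<longleftrightarrow> (\<exists>s. q s x = 0)"
  shows "recursive_set A"
proof -
  have search: "computes (Suc 0) (Mn (r_mul P Q)) (\<lambda>xs. LEAST s. p s (xs ! 0) * q s (xs ! 0) = 0)"
    using computes_Mn[OF computes_mul[OF P Q]] some_search_succeeds[OF in_A not_in_A]
    by (simp add: length_Suc_conv)
  have "computes (Suc 0) (Proj 0) (\<lambda>xs. xs ! 0)" by (rule computes_Proj) simp
  from computes_Comp2[OF computes_sub[OF computes_const[of _ 1] P] search this]
  have "computes (Suc 0) (Comp (r_sub (r_const 1) P) [Mn (r_mul P Q), Proj 0])
      (\<lambda>xs. 1 - p (LEAST s. p s (xs ! 0) * q s (xs ! 0) = 0) (xs ! 0))"
    by (simp only: nth_Cons_0 nth_Cons_Suc One_nat_def)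
  then have "computes (Suc 0) (Comp (r_sub (r_const 1) P) [Mn (r_mul P Q), Proj 0])
      (\<lambda>xs. if xs ! 0 \<in> A then 1 else 0)"
    by (rule computes_cong) (simp only: first_witness_decides[OF in_A not_in_A])
  then have "eval (Comp (r_sub (r_const 1) P) [Mn (r_mul P Q), Proj 0]) [x] (if x \<in> A then 1 else 0)" for x
    unfolding computes_def by (metis length_Cons list.size(3) nth_Cons_0)
  then show ?thesis unfolding recursive_set_def by blast
qed

section \<open>Evaluation with a step bound\<close>

fun option_code :: "nat option \<Rightarrow> nat" where
  "option_code None = 0"
| "option_code (Some y) = Suc y"

text \<open>State of the search for the least zero of \<open>h\<close> after inspecting \<open>h 0, \<dots>, h (j - 1)\<close>,
  where \<open>v = option_code (h j)\<close>: \<open>0\<close> while all values seen were defined and positive,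
  \<open>1\<close> once an undefined value was met first, \<open>m + 2\<close> once the least zero \<open>m\<close> was found.\<close>

definition mu_step :: "nat \<Rightarrow> nat \<Rightarrow> nat \<Rightarrow> nat" where
  "mu_step j r v = (if r = 0 then (if v = 0 then 1 else if v = 1 then j + 2 else 0) else r)"

primrec mu_state :: "(nat \<Rightarrow> nat option) \<Rightarrow> nat \<Rightarrow> nat" where
  "mu_state h 0 = 0"
| "mu_state h (Suc j) = mu_step j (mu_state h j) (option_code (h j))"

primrec eval_clocked :: "recf \<Rightarrow> nat \<Rightarrow> nat list \<Rightarrow> nat option" where
  "eval_clocked Z k xs = Some 0"
| "eval_clocked S k xs = (case xs of [] \<Rightarrow> None | x # _ \<Rightarrow> Some (Suc x))"
| "eval_clocked (Proj i) k xs = (if i < length xs then Some (xs ! i) else None)"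
| "eval_clocked (Comp f gs) k xs = (let rs = map (\<lambda>g. eval_clocked g k xs) gs in
      if None \<in> set rs then None else eval_clocked f k (map the rs))"
| "eval_clocked (Prim f g) k xs = (case xs of [] \<Rightarrow> None | n # ys \<Rightarrow>
      rec_nat (eval_clocked f k ys)
        (\<lambda>m r. case r of None \<Rightarrow> None | Some y \<Rightarrow> eval_clocked g k (m # y # ys)) n)"
| "eval_clocked (Mn g) k xs = (let r = mu_state (\<lambda>m. eval_clocked g k (m # xs)) k in
      if 2 \<le> r then Some (r - 2) else None)"

lemma mu_state_stable: assumes "mu_state h j \<noteq> 0" "j \<le> j'" shows "mu_state h j' = mu_state h j"
  using assms(2) by (induction j' rule: dec_induct) (use assms(1) in \<open>simp_all add: mu_step_def\<close>)

lemma mu_state_zero: "mu_state h j = 0 \<Longrightarrow> m < j \<Longrightarrow> \<exists>y>0. h m = Some y"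
proof (induction j)
  case (Suc j)
  have j0: "mu_state h j = 0"
    using mu_state_stable[of h j "Suc j"] Suc.prems(1) by fastforce
  show ?case
  proof (cases "m = j")
    case True
    with Suc.prems j0 show ?thesis
      by (cases "h j") (auto simp: mu_step_def split: if_splits)
  qed (use Suc j0 in simp)
qed simp

lemma mu_state_sound:
  "2 \<le> mu_state h j \<Longrightarrow> mu_state h j - 2 < j \<and> h (mu_state h j - 2) = Some 0 \<and>
    (\<forall>m < mu_state h j - 2. \<exists>y>0. h m = Some y)"
proof (induction j)
  case (Suc j)
  show ?case
  proof (cases "mu_state h j = 0")
    case False
    then have "mu_state h (Suc j) = mu_state h j" by (rule mu_state_stable) simp
    with Suc show ?thesis by simp
  next
    case True
    then have v: "mu_state h (Suc j) = mu_step j 0 (option_code (h j))" by simp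
    with Suc.prems have "option_code (h j) = 1" by (auto simp: mu_step_def split: if_splits)
    then have "h j = Some 0" and "mu_state h (Suc j) = j + 2"
      using v by (cases "h j"; simp add: mu_step_def)+
    then show ?thesis using mu_state_zero[OF True] by simp
  qed
qed simp

lemma mu_state_complete:
  assumes "h n = Some 0" "\<forall>m<n. \<exists>y>0. h m = Some y" "n < j"
  shows "mu_state h j = n + 2"
proof -
  have "mu_state h j = 0" if "j \<le> n" for j
    using that
  proof (induction j)
    case (Suc j)
    then have "j < n" by simp
    then obtain y where "y > 0" "h j = Some y" using assms(2) by blast
    with Suc show ?case by (simp add: mu_step_def)
  qed simp
  then have "mu_state h (Suc n) = n + 2" using assms(1) by (simp add: mu_step_def)
  moreover have "mu_state h j = mu_state h (Suc n)"
    by (rule mu_state_stable) (use \<open>mu_state h (Suc n) = n + 2\<close> assms(3) in auto)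
  ultimately show ?thesis by simp
qed

lemma eval_clocked_sound: "eval_clocked f k xs = Some y \<Longrightarrow> eval f xs y"
proof (induction f arbitrary: xs y)
  case Z then show ?case by (auto intro: eval_Z)
next
  case S then show ?case by (auto intro: eval_S split: list.splits)
next
  case (Proj i) then show ?case by (auto intro: eval_Proj split: if_splits)
next
  case (Comp f gs)
  let ?rs = "map (\<lambda>g. eval_clocked g k xs) gs"
  have defined: "None \<notin> set ?rs" and ef: "eval_clocked f k (map the ?rs) = Some y"
    using Comp.prems by (auto simp: Let_def split: if_splits)
  have "list_all2 (\<lambda>g y. eval g xs y) gs (map the ?rs)"
  proof (rule list_all2_all_nthI)
    fix i assume i: "i < length gs"
    then have "eval_clocked (gs ! i) k xs \<noteq> None" using defined by (metis length_map nth_map nth_mem)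
    then show "eval (gs ! i) xs (map the ?rs ! i)"
      using Comp.IH i nth_mem by force
  qed simp
  then show ?case using Comp.IH ef by (blast intro: eval_Comp)
next
  case (Prim f g)
  then obtain n ys where xs: "xs = n # ys" by (auto split: list.splits)
  have "rec_nat (eval_clocked f k ys)
      (\<lambda>m r. case r of None \<Rightarrow> None | Some y \<Rightarrow> eval_clocked g k (m # y # ys)) n = Some z
    \<Longrightarrow> eval (Prim f g) (n # ys) z" for z
    by (induction n arbitrary: z)
      (auto intro: eval_Prim0 eval_PrimS Prim.IH split: option.splits)
  then show ?case using Prim.prems xs by simp
next
  case (Mn g)
  let ?h = "\<lambda>m. eval_clocked g k (m # xs)"
  have r: "2 \<le> mu_state ?h k" and y: "y = mu_state ?h k - 2"
    using Mn.prems by (auto simp: Let_def split: if_splits)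
  from mu_state_sound[OF r] show ?case unfolding y using Mn.IH
    by (intro eval_Mn) blast+
qed

lemma eval_clocked_mono: "eval_clocked f k xs = Some y \<Longrightarrow> k \<le> k' \<Longrightarrow> eval_clocked f k' xs = Some y"
proof (induction f arbitrary: xs y)
  case (Comp f gs)
  let ?rs = "map (\<lambda>g. eval_clocked g k xs) gs"
  have defined: "None \<notin> set ?rs" and ef: "eval_clocked f k (map the ?rs) = Some y"
    using Comp.prems by (auto simp: Let_def split: if_splits)
  have same_args: "map (\<lambda>g. eval_clocked g k' xs) gs = ?rs"
  proof (rule map_cong[OF refl])
    fix g assume g: "g \<in> set gs"
    then have "eval_clocked g k xs \<noteq> None" using defined by (metis image_eqI list.set_map)
    then show "eval_clocked g k' xs = eval_clocked g k xs" using Comp.IH(2)[OF g] Comp.prems(2) by auto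
  qed
  show ?case using defined ef Comp.IH(1)[OF ef Comp.prems(2)] by (simp add: Let_def same_args)
next
  case (Prim f g)
  show ?case
  proof (cases xs)
    case (Cons n ys)
    have "rec_nat (eval_clocked f k ys)
        (\<lambda>m r. case r of None \<Rightarrow> None | Some y \<Rightarrow> eval_clocked g k (m # y # ys)) n = Some z \<Longrightarrow>
      rec_nat (eval_clocked f k' ys)
        (\<lambda>m r. case r of None \<Rightarrow> None | Some y \<Rightarrow> eval_clocked g k' (m # y # ys)) n = Some z" for z
      by (induction n arbitrary: z)
        (use Prim.IH Prim.prems(2) in \<open>auto split: option.splits\<close>)
    then show ?thesis using Prim.prems Cons by simp
  qed (use Prim in simp)
next
  case (Mn g)
  let ?h = "\<lambda>m. eval_clocked g k (m # xs)" and ?h' = "\<lambda>m. eval_clocked g k' (m # xs)"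
  have r: "2 \<le> mu_state ?h k" and y: "y = mu_state ?h k - 2"
    using Mn.prems by (auto simp: Let_def split: if_splits)
  note found = mu_state_sound[OF r]
  have "mu_state ?h' k' = y + 2"
    by (rule mu_state_complete) (use found y Mn.IH Mn.prems(2) in auto)
  then show ?case by (simp add: Let_def)
qed (auto split: list.splits)

lemma eventually_all_below:
  "(\<And>m. m < (n::nat) \<Longrightarrow> \<exists>k::nat. \<forall>k'\<ge>k. P m k') \<Longrightarrow> \<exists>k. \<forall>m<n. \<forall>k'\<ge>k. P m k'"
proof (induction n)
  case (Suc n)
  obtain k1 where k1: "\<forall>m<n. \<forall>k'\<ge>k1. P m k'" using Suc by auto
  obtain k2 where k2: "\<forall>k'\<ge>k2. P n k'" using Suc.prems[of n] by blast
  have "\<forall>m<Suc n. \<forall>k'\<ge>max k1 k2. P m k'"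
    using k1 k2 less_Suc_eq by auto
  then show ?case by blast
qed simp

lemma eval_clocked_complete: "eval f xs y \<Longrightarrow> \<exists>k. eval_clocked f k xs = Some y"
proof (induction rule: eval.induct)
  case (eval_Comp xs gs ys f z)
  have "\<exists>k. \<forall>i<length gs. \<forall>k'\<ge>k. eval_clocked (gs ! i) k' xs = Some (ys ! i)"
  proof (rule eventually_all_below)
    fix i assume "i < length gs"
    then obtain k where "eval_clocked (gs ! i) k xs = Some (ys ! i)"
      using eval_Comp.IH(1) by (auto simp: list_all2_conv_all_nth)
    then show "\<exists>k. \<forall>k'\<ge>k. eval_clocked (gs ! i) k' xs = Some (ys ! i)" using eval_clocked_mono by blast
  qed
  then obtain k1 where k1: "\<forall>i<length gs. \<forall>k'\<ge>k1. eval_clocked (gs ! i) k' xs = Some (ys ! i)" by blast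
  obtain k2 where k2: "eval_clocked f k2 ys = Some z" using eval_Comp.IH(2) by blast
  let ?k = "max k1 k2"
  have len: "length ys = length gs" using eval_Comp.IH(1) by (simp add: list_all2_lengthD)
  have "map (\<lambda>g. eval_clocked g ?k xs) gs = map Some ys"
    by (rule nth_equalityI) (auto simp: len k1)
  moreover have "eval_clocked f ?k ys = Some z" using eval_clocked_mono[OF k2] by simp
  ultimately have "eval_clocked (Comp f gs) ?k xs = Some z" by (simp add: Let_def comp_def)
  then show ?case by blast
next
  case (eval_PrimS f g n xs y z)
  obtain k1 where k1: "eval_clocked (Prim f g) k1 (n # xs) = Some y" using eval_PrimS by blast
  obtain k2 where k2: "eval_clocked g k2 (n # y # xs) = Some z" using eval_PrimS by blast
  have "eval_clocked (Prim f g) (max k1 k2) (n # xs) = Some y"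
    and "eval_clocked g (max k1 k2) (n # y # xs) = Some z"
    using eval_clocked_mono[OF k1] eval_clocked_mono[OF k2] by simp_all
  then show ?case by (intro exI[of _ "max k1 k2"]) simp
next
  case (eval_Mn g n xs)
  obtain k0 where k0: "eval_clocked g k0 (n # xs) = Some 0" using eval_Mn by blast
  have "\<exists>k. \<forall>m<n. \<forall>k'\<ge>k. \<exists>y>0. eval_clocked g k' (m # xs) = Some y"
  proof (rule eventually_all_below)
    fix m assume "m < n"
    then obtain y k where "y > 0" "eval_clocked g k (m # xs) = Some y" using eval_Mn.IH(2) by blast
    then show "\<exists>k. \<forall>k'\<ge>k. \<exists>y>0. eval_clocked g k' (m # xs) = Some y" using eval_clocked_mono by blast
  qed
  then obtain k1 where k1: "\<forall>m<n. \<forall>k'\<ge>k1. \<exists>y>0. eval_clocked g k' (m # xs) = Some y" by blast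
  let ?k = "max (max k0 k1) (Suc n)"
  have "mu_state (\<lambda>m. eval_clocked g ?k (m # xs)) ?k = n + 2"
    by (rule mu_state_complete) (auto simp: k1 intro: eval_clocked_mono[OF k0])
  then show ?case by (intro exI[of _ ?k]) (simp add: Let_def)
qed (auto intro: exI[of _ 0])

lemma eval_iff_eval_clocked: "eval f xs y \<longleftrightarrow> (\<exists>k. eval_clocked f k xs = Some y)"
  using eval_clocked_sound eval_clocked_complete by blast

section \<open>Bounded evaluation is primitive recursive\<close>

primrec r_all_nonzero :: "recf list \<Rightarrow> recf" where
  "r_all_nonzero [] = r_const 1"
| "r_all_nonzero (G # Gs) = r_mul (r_sgn G) (r_all_nonzero Gs)"

lemma computes_all_nonzero:
  "list_all2 (\<lambda>G g. computes a G g) Gs gs \<Longrightarrow>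
   computes a (r_all_nonzero Gs) (\<lambda>xs. prod_list (map (\<lambda>g. if g xs = 0 then 0 else 1) gs))"
  by (induction rule: list_all2_induct) (auto intro: computes_const dest: computes_mul[OF computes_sgn])

definition r_mu_step :: "recf \<Rightarrow> recf \<Rightarrow> recf \<Rightarrow> recf" where
  "r_mu_step J R V = r_cond R (r_cond V (r_const 1) (r_cond (r_pred V) (r_add J (r_const 2)) Z)) R"

lemma computes_mu_step:
  "computes a J j \<Longrightarrow> computes a R r \<Longrightarrow> computes a V v \<Longrightarrow>
   computes a (r_mu_step J R V) (\<lambda>xs. mu_step (j xs) (r xs) (v xs))"
  unfolding r_mu_step_def
  by (rule computes_cong, (rule computes_cond computes_const computes_pred computes_add computes_Z
      | assumption)+) (auto simp: mu_step_def)

lemma map_nth_upt_drop: "length zs = n \<Longrightarrow> map (nth zs) [m..<n] = drop m zs"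
  by (rule nth_equalityI) auto

primrec r_clocked :: "recf \<Rightarrow> nat \<Rightarrow> recf" where
  "r_clocked Z a = r_const 1"
| "r_clocked S a = (case a of 0 \<Rightarrow> Z | Suc _ \<Rightarrow> Comp S [Comp S [Proj 1]])"
| "r_clocked (Proj i) a = (if i < a then Comp S [Proj (Suc i)] else Z)"
| "r_clocked (Comp f gs) a = r_mul (r_all_nonzero (map (\<lambda>g. r_clocked g a) gs))
      (Comp (r_clocked f (length gs)) (Proj 0 # map (\<lambda>g. r_pred (r_clocked g a)) gs))"
| "r_clocked (Prim f g) a = (case a of 0 \<Rightarrow> Z | Suc b \<Rightarrow>
      Comp (Prim (r_clocked f b) (r_mul (r_sgn (Proj 1))
          (Comp (r_clocked g (Suc (Suc b))) (Proj 2 # Proj 0 # r_pred (Proj 1) # map Proj [3..<b+3]))))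
        (Proj 1 # Proj 0 # map Proj [2..<b+2]))"
| "r_clocked (Mn g) a = r_pred (Comp (Prim Z (r_mu_step (Proj 0) (Proj 1)
          (Comp (r_clocked g (Suc a)) (Proj 2 # Proj 0 # map Proj [3..<a+3]))))
        (Proj 0 # map Proj [0..<a+1]))"

abbreviation clocked_code :: "recf \<Rightarrow> nat list \<Rightarrow> nat" where
  "clocked_code f xs \<equiv> option_code (eval_clocked f (hd xs) (tl xs))"

lemma option_code_eval_clocked_Comp:
  "option_code (eval_clocked (Comp f gs) k ys) =
     prod_list (map (\<lambda>g. if option_code (eval_clocked g k ys) = 0 then 0 else 1) gs) *
     option_code (eval_clocked f k (map (\<lambda>g. option_code (eval_clocked g k ys) - 1) gs))"
proof (cases "None \<in> (\<lambda>g. eval_clocked g k ys) ` set gs")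
  case True
  then have "0 \<in> set (map (\<lambda>g. if option_code (eval_clocked g k ys) = 0 then 0 else 1 :: nat) gs)"
    by force
  with True show ?thesis by (simp add: Let_def prod_list_zero_iff)
next
  case False
  then have all_defined: "\<And>g. g \<in> set gs \<Longrightarrow> \<exists>y. eval_clocked g k ys = Some y" by force
  then have ones: "map (\<lambda>g. if option_code (eval_clocked g k ys) = 0 then 0 else 1 :: nat) gs = map (\<lambda>g. 1) gs"
    and args: "map (\<lambda>g. option_code (eval_clocked g k ys) - 1) gs = map (\<lambda>g. the (eval_clocked g k ys)) gs"
    by (auto intro!: map_cong dest!: all_defined)
  have "prod_list (map (\<lambda>g. 1 :: nat) gs) = 1" by (induction gs) auto
  then show ?thesis unfolding ones args using False by (simp add: Let_def comp_def)
qed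

lemma computes_clocked_Prim:
  assumes IHf: "\<And>a. computes (Suc a) (r_clocked f a) (clocked_code f)"
    and IHg: "\<And>a. computes (Suc a) (r_clocked g a) (clocked_code g)"
  shows "computes (Suc a) (r_clocked (Prim f g) a) (clocked_code (Prim f g))"
proof (cases a)
  case 0 then show ?thesis by (auto intro!: computes_cong[OF computes_Z] simp: length_Suc_conv)
next
  case (Suc b)
  define step where "step zs = (if zs ! 1 = 0 then 0 else 1) *
    option_code (eval_clocked g (zs ! 2) (zs ! 0 # (zs ! 1 - 1) # drop 3 zs))" for zs
  define h where "h zs = option_code (eval_clocked (Prim f g) (zs ! 1) (zs ! 0 # drop 2 zs))" for zs
  have args: "list_all2 (\<lambda>G g. computes (Suc (Suc (Suc b))) G g)
      (Proj 2 # Proj 0 # r_pred (Proj 1) # map Proj [3..<b+3])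
      ((\<lambda>zs. zs ! 2) # (\<lambda>zs. zs ! 0) # (\<lambda>zs. zs ! 1 - 1) # map (\<lambda>i zs. zs ! i) [3..<b+3])"
    by (intro list_all2_Cons[THEN iffD2] conjI computes_Proj computes_pred computes_projs) auto
  have "computes (Suc (Suc (Suc b)))
      (Comp (r_clocked g (Suc (Suc b))) (Proj 2 # Proj 0 # r_pred (Proj 1) # map Proj [3..<b+3]))
      (\<lambda>zs. option_code (eval_clocked g (zs ! 2) (zs ! 0 # (zs ! 1 - 1) # drop 3 zs)))"
    by (rule computes_CompI[OF IHg _ args]) (simp_all add: comp_def map_nth_upt_drop)
  then have "computes (Suc (Suc (Suc b))) (r_mul (r_sgn (Proj 1))
      (Comp (r_clocked g (Suc (Suc b))) (Proj 2 # Proj 0 # r_pred (Proj 1) # map Proj [3..<b+3]))) step"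
    unfolding step_def by (intro computes_mul computes_sgn computes_Proj) simp
  then have prim: "computes (Suc (Suc b)) (Prim (r_clocked f b) (r_mul (r_sgn (Proj 1))
      (Comp (r_clocked g (Suc (Suc b))) (Proj 2 # Proj 0 # r_pred (Proj 1) # map Proj [3..<b+3])))) h"
    by (rule computes_Prim[OF IHf]) (auto simp: h_def step_def length_Suc_conv split: option.splits)
  have swap: "list_all2 (\<lambda>G g. computes (Suc (Suc b)) G g) (Proj 1 # Proj 0 # map Proj [2..<b+2])
      ((\<lambda>zs. zs ! 1) # (\<lambda>zs. zs ! 0) # map (\<lambda>i zs. zs ! i) [2..<b+2])"
    by (intro list_all2_Cons[THEN iffD2] conjI computes_Proj computes_projs ballI) auto
  show ?thesis unfolding Suc r_clocked.simps nat.case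
  proof (rule computes_CompI[OF prim _ swap])
    fix xs :: "nat list" assume "length xs = Suc (Suc b)"
    then obtain k n ys where xs: "xs = k # n # ys" and ys: "length ys = b" by (auto simp: length_Suc_conv)
    then have "map (nth xs) [2..<b+2] = ys" using map_nth_upt_drop[of xs "b+2" 2] by simp
    then show "clocked_code (Prim f g) xs =
        h (map (\<lambda>g. g xs) ((\<lambda>zs. zs ! 1) # (\<lambda>zs. zs ! 0) # map (\<lambda>i zs. zs ! i) [2..<b+2]))"
      by (simp add: xs h_def comp_def)
  qed auto
qed

lemma computes_clocked_Mn:
  assumes IHg: "\<And>a. computes (Suc a) (r_clocked g a) (clocked_code g)"
  shows "computes (Suc a) (r_clocked (Mn g) a) (clocked_code (Mn g))"
proof -
  define h where "h zs = mu_state (\<lambda>m. eval_clocked g (zs ! 1) (m # drop 2 zs)) (zs ! 0)" for zs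
  have args: "list_all2 (\<lambda>G g. computes (Suc (Suc (Suc a))) G g) (Proj 2 # Proj 0 # map Proj [3..<a+3])
      ((\<lambda>zs. zs ! 2) # (\<lambda>zs. zs ! 0) # map (\<lambda>i zs. zs ! i) [3..<a+3])"
    by (intro list_all2_Cons[THEN iffD2] conjI computes_Proj computes_projs) auto
  have "computes (Suc (Suc (Suc a))) (Comp (r_clocked g (Suc a)) (Proj 2 # Proj 0 # map Proj [3..<a+3]))
      (\<lambda>zs. option_code (eval_clocked g (zs ! 2) (zs ! 0 # drop 3 zs)))"
    by (rule computes_CompI[OF IHg _ args]) (simp_all add: comp_def map_nth_upt_drop)
  then have "computes (Suc (Suc (Suc a))) (r_mu_step (Proj 0) (Proj 1)
      (Comp (r_clocked g (Suc a)) (Proj 2 # Proj 0 # map Proj [3..<a+3])))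
      (\<lambda>zs. mu_step (zs ! 0) (zs ! 1) (option_code (eval_clocked g (zs ! 2) (zs ! 0 # drop 3 zs))))"
    by (intro computes_mu_step computes_Proj) simp_all
  then have prim: "computes (Suc (Suc a)) (Prim Z (r_mu_step (Proj 0) (Proj 1)
      (Comp (r_clocked g (Suc a)) (Proj 2 # Proj 0 # map Proj [3..<a+3])))) h"
    by (rule computes_Prim[OF computes_Z]) (simp_all add: h_def)
  have dup: "list_all2 (\<lambda>G g. computes (Suc a) G g) (Proj 0 # map Proj [0..<a+1])
      ((\<lambda>zs. zs ! 0) # map (\<lambda>i zs. zs ! i) [0..<a+1])"
    by (intro list_all2_Cons[THEN iffD2] conjI computes_Proj computes_projs ballI) auto
  have "computes (Suc a) (Comp (Prim Z (r_mu_step (Proj 0) (Proj 1)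
      (Comp (r_clocked g (Suc a)) (Proj 2 # Proj 0 # map Proj [3..<a+3])))) (Proj 0 # map Proj [0..<a+1]))
      (\<lambda>xs. mu_state (\<lambda>m. eval_clocked g (hd xs) (m # tl xs)) (hd xs))"
  proof (rule computes_CompI[OF prim _ dup])
    fix xs :: "nat list" assume "length xs = Suc a"
    then obtain k ys where xs: "xs = k # ys" and ys: "length ys = a" by (auto simp: length_Suc_conv)
    then have "map (nth xs) [0..<a+1] = xs" using map_nth_upt_drop[of xs "a+1" 0] by simp
    then show "mu_state (\<lambda>m. eval_clocked g (hd xs) (m # tl xs)) (hd xs) =
        h (map (\<lambda>g. g xs) ((\<lambda>zs. zs ! 0) # map (\<lambda>i zs. zs ! i) [0..<a+1]))"
      by (simp add: xs h_def comp_def)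
  qed simp
  then show ?thesis unfolding r_clocked.simps
    by (rule computes_cong[OF computes_pred]) (simp add: Let_def, linarith)
qed

lemma computes_clocked: "computes (Suc a) (r_clocked f a) (clocked_code f)"
proof (induction f arbitrary: a)
  case Z
  show ?case unfolding r_clocked.simps by (rule computes_cong[OF computes_const]) simp
next
  case S
  show ?case
  proof (cases a)
    case 0 then show ?thesis by (auto intro!: computes_cong[OF computes_Z] simp: length_Suc_conv)
  next
    case (Suc b)
    have "computes (Suc a) (r_clocked S a) (\<lambda>xs. Suc (Suc (xs ! 1)))"
      unfolding Suc by (simp, intro computes_S computes_Proj) simp
    then show ?thesis
      by (rule computes_cong) (auto simp: Suc length_Suc_conv)
  qed
next
  case (Proj i)
  show ?case
  proof (cases "i < a")
    case True
    have "computes (Suc a) (r_clocked (Proj i) a) (\<lambda>xs. Suc (xs ! Suc i))"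
      using True by (simp, intro computes_S computes_Proj) simp
    then show ?thesis
      by (rule computes_cong) (use True in \<open>auto simp: length_Suc_conv\<close>)
  qed (auto intro!: computes_cong[OF computes_Z] simp: length_Suc_conv)
next
  case (Comp f gs)
  have results: "list_all2 (\<lambda>G g. computes (Suc a) G g) (map (\<lambda>g. r_clocked g a) gs) (map clocked_code gs)"
    unfolding list_all2_map1 list_all2_map2 by (rule list.rel_refl_strong) (use Comp.IH(2) in auto)
  have args: "list_all2 (\<lambda>G g. computes (Suc a) G g) (Proj 0 # map (\<lambda>g. r_pred (r_clocked g a)) gs)
      ((\<lambda>xs. xs ! 0) # map (\<lambda>g xs. clocked_code g xs - 1) gs)"
    unfolding list_all2_Cons list_all2_map1 list_all2_map2
    by (intro conjI computes_Proj list.rel_refl_strong computes_pred Comp.IH(2)) simp_all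
  have "computes (Suc a) (Comp (r_clocked f (length gs)) (Proj 0 # map (\<lambda>g. r_pred (r_clocked g a)) gs))
      (\<lambda>xs. option_code (eval_clocked f (hd xs) (map (\<lambda>g. clocked_code g xs - 1) gs)))"
    by (rule computes_CompI[OF Comp.IH(1) _ args]) (auto simp: comp_def length_Suc_conv)
  then show ?case unfolding r_clocked.simps
  proof (rule computes_cong[OF computes_mul[OF computes_all_nonzero[OF results]]])
    fix xs :: "nat list" assume "length xs = Suc a"
    then obtain k ys where "xs = k # ys" by (cases xs) auto
    then show "prod_list (map (\<lambda>g. if g xs = 0 then 0 else 1) (map clocked_code gs)) *
        option_code (eval_clocked f (hd xs) (map (\<lambda>g. clocked_code g xs - 1) gs)) = clocked_code (Comp f gs) xs"
      using option_code_eval_clocked_Comp[of f gs k ys] by (simp add: comp_def)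
  qed
next
  case (Prim f g)
  then show ?case by (rule computes_clocked_Prim)
next
  case (Mn g)
  then show ?case by (rule computes_clocked_Mn)
qed

section \<open>Evaluating coded polynomials\<close>

definition triple :: "nat \<Rightarrow> nat \<Rightarrow> nat \<Rightarrow> nat" where
  "triple p q b = prod_encode (p, prod_encode (q, b))"

definition triple_pos :: "nat \<Rightarrow> nat" where
  "triple_pos v = decode_fst v"

definition triple_neg :: "nat \<Rightarrow> nat" where
  "triple_neg v = decode_fst (decode_snd v)"

definition triple_flag :: "nat \<Rightarrow> nat" where
  "triple_flag v = decode_snd (decode_snd v)"

lemma triple_sel [simp]:
  "triple_pos (triple p q b) = p" "triple_neg (triple p q b) = q" "triple_flag (triple p q b) = b"
  by (simp_all add: triple_def triple_pos_def triple_neg_def triple_flag_def)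

definition coord :: "nat \<Rightarrow> nat \<Rightarrow> nat" where
  "coord t i = decode_fst ((decode_snd ^^ i) t)"

definition assignment :: "nat \<Rightarrow> nat \<Rightarrow> nat \<Rightarrow> nat" where
  "assignment n t i = (if i < n then coord t i else 0)"

text \<open>The value of the term coded by \<open>c\<close> is the triple \<open>(p, q, b)\<close> with \<open>p - q\<close> its value under
  \<open>assignment n t\<close> and \<open>b = 0\<close> iff all its variables are below \<open>n\<close>; \<open>V\<close> gives the triples of
  smaller codes.\<close>

definition term_value_step :: "nat \<Rightarrow> nat \<Rightarrow> nat \<Rightarrow> (nat \<Rightarrow> nat) \<Rightarrow> nat" where
  "term_value_step n t c V = (let j = c div 4; va = V (decode_fst j); vb = V (decode_snd j) in
     if c mod 4 = 0 then (if j < n then triple (coord t j) 0 0 else triple 0 0 1)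
     else if c mod 4 = 1 then (if even j then triple (j div 2) 0 0 else triple 0 (Suc (j div 2)) 0)
     else if c mod 4 = 2 then
       triple (triple_pos va + triple_pos vb) (triple_neg va + triple_neg vb) (triple_flag va + triple_flag vb)
     else triple (triple_pos va * triple_pos vb + triple_neg va * triple_neg vb)
       (triple_pos va * triple_neg vb + triple_neg va * triple_pos vb) (triple_flag va + triple_flag vb))"

text \<open>Course-of-values recursion: \<open>value_history n t c\<close> holds the values of the codes
  \<open>c - 1, \<dots>, 0\<close> as nested pairs, so the value of \<open>a < c\<close> sits at depth \<open>c - 1 - a\<close>.\<close>

primrec value_history :: "nat \<Rightarrow> nat \<Rightarrow> nat \<Rightarrow> nat" where
  "value_history n t 0 = 0"
| "value_history n t (Suc c) = prod_encode
    (term_value_step n t c (\<lambda>a. decode_fst ((decode_snd ^^ (c - 1 - a)) (value_history n t c))),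
     value_history n t c)"

definition term_value :: "nat \<Rightarrow> nat \<Rightarrow> nat \<Rightarrow> nat" where
  "term_value n t c = decode_fst (value_history n t (Suc c))"

lemma value_history_lookup:
  "a < c \<Longrightarrow> decode_fst ((decode_snd ^^ (c - 1 - a)) (value_history n t c)) = term_value n t a"
proof (induction c)
  case (Suc c)
  show ?case
  proof (cases "a = c")
    case False
    then have "a < c" and "Suc c - 1 - a = Suc (c - 1 - a)" using Suc.prems by simp_all
    then show ?thesis using Suc.IH by (simp only: funpow_Suc_right) simp
  qed (simp add: term_value_def)
qed simp

lemma term_value_step_cong:
  assumes "\<And>a. a < c \<Longrightarrow> V a = V' a" shows "term_value_step n t c V = term_value_step n t c V'"
proof (cases "c mod 4 < 2")
  case False
  then have "c div 4 < c" by auto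
  then have "V (decode_fst (c div 4)) = V' (decode_fst (c div 4))"
    and "V (decode_snd (c div 4)) = V' (decode_snd (c div 4))"
    using assms decode_fst_le decode_snd_le le_less_trans by blast+
  then show ?thesis by (simp add: term_value_step_def Let_def)
qed (auto simp: term_value_step_def Let_def)

lemma term_value_unfold: "term_value n t c = term_value_step n t c (term_value n t)"
proof -
  have "term_value n t c =
      term_value_step n t c (\<lambda>a. decode_fst ((decode_snd ^^ (c - 1 - a)) (value_history n t c)))"
    by (simp add: term_value_def)
  also have "\<dots> = term_value_step n t c (term_value n t)"
    by (rule term_value_step_cong) (rule value_history_lookup)
  finally show ?thesis .
qed

lemma term_value_enc:
  "int (triple_pos (term_value n t (enc D))) - int (triple_neg (term_value n t (enc D))) = dval (assignment n t) D
   \<and> (triple_flag (term_value n t (enc D)) = 0 \<longleftrightarrow> vars D \<subseteq> {..<n})"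
proof (induction D)
  case (Var i)
  show ?case unfolding term_value_unfold[of n t "enc (Var i)"]
    by (simp add: term_value_step_def assignment_def)
next
  case (Const c)
  obtain j where j: "int_encode c = j" by simp
  have decode: "(if even j then int (j div 2) else - int (j div 2) - 1) = c"
    using int_encode_inverse[of c] by (simp add: j int_decode_def sum_decode_def split: if_splits)
  have "Suc (4 * j) div 4 = j" "Suc (4 * j) mod 4 = 1" by simp_all
  with decode show ?case unfolding term_value_unfold[of n t "enc (Const c)"]
    by (simp add: term_value_step_def Let_def j split: if_splits)
next
  case (Add a b)
  let ?j = "prod_encode (enc a, enc b)"
  have "Suc (Suc (4 * ?j)) div 4 = ?j" "Suc (Suc (4 * ?j)) mod 4 = 2" by presburger+
  with Add show ?case unfolding term_value_unfold[of n t "enc (Add a b)"]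
    by (auto simp: term_value_step_def Let_def)
next
  case (Mul a b)
  let ?A = "term_value n t (enc a)" and ?B = "term_value n t (enc b)" and ?j = "prod_encode (enc a, enc b)"
  have "int (triple_pos ?A * triple_pos ?B + triple_neg ?A * triple_neg ?B)
      - int (triple_pos ?A * triple_neg ?B + triple_neg ?A * triple_pos ?B) =
    (int (triple_pos ?A) - int (triple_neg ?A)) * (int (triple_pos ?B) - int (triple_neg ?B))"
    by (simp add: algebra_simps)
  moreover have "Suc (Suc (Suc (4 * ?j))) div 4 = ?j" "Suc (Suc (Suc (4 * ?j))) mod 4 = 3" by presburger+
  ultimately show ?case using Mul unfolding term_value_unfold[of n t "enc (Mul a b)"]
    by (auto simp: term_value_step_def Let_def)
qed

definition r_value_step :: recf where
  "r_value_step = (let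
     J = r_div 4 (Proj 0); M = r_mod 4 (Proj 0);
     lookup = \<lambda>A. r_decode_fst (r_iter_decode_snd (r_sub (r_pred (Proj 0)) A) (Proj 1));
     VA = lookup (r_decode_fst J); VB = lookup (r_decode_snd J);
     pos = r_decode_fst; neg = \<lambda>V. r_decode_fst (r_decode_snd V); flag = \<lambda>V. r_decode_snd (r_decode_snd V);
     trip = \<lambda>P Q B. r_prod_encode P (r_prod_encode Q B)
   in r_prod_encode
     (r_cond M
       (r_cond (r_le (Comp S [J]) (Proj 2)) (trip Z Z (r_const 1))
         (trip (r_decode_fst (r_iter_decode_snd J (Proj 3))) Z Z))
     (r_cond (r_pred M)
       (r_cond (r_mod 2 J) (trip (r_div 2 J) Z Z) (trip Z (Comp S [r_div 2 J]) Z))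
     (r_cond (r_sub M (r_const 2))
       (trip (r_add (pos VA) (pos VB)) (r_add (neg VA) (neg VB)) (r_add (flag VA) (flag VB)))
       (trip (r_add (r_mul (pos VA) (pos VB)) (r_mul (neg VA) (neg VB)))
         (r_add (r_mul (pos VA) (neg VB)) (r_mul (neg VA) (pos VB))) (r_add (flag VA) (flag VB))))))
     (Proj 1))"

lemma computes_value_step:
  "computes (Suc (Suc (Suc (Suc 0)))) r_value_step (\<lambda>zs. prod_encode
    (term_value_step (zs ! 2) (zs ! 3) (zs ! 0) (\<lambda>a. decode_fst ((decode_snd ^^ (zs ! 0 - 1 - a)) (zs ! 1))),
     zs ! 1))"
  unfolding r_value_step_def Let_def
  by (rule computes_cong, (rule computes_prod_encode computes_cond computes_mul computes_add computes_sub
      computes_pred computes_const computes_Z computes_S computes_mod computes_div computes_decode_fst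
      computes_decode_snd computes_iter_decode_snd computes_le computes_Proj | simp)+)
    (auto simp: term_value_step_def Let_def triple_def triple_pos_def triple_neg_def triple_flag_def
      coord_def)

definition r_term_value :: "recf \<Rightarrow> recf \<Rightarrow> recf \<Rightarrow> recf" where
  "r_term_value N T E = r_decode_fst (Comp (Prim Z r_value_step) [Comp S [E], N, T])"

lemma computes_term_value:
  assumes "computes a N n" "computes a T t" "computes a E e"
  shows "computes a (r_term_value N T E) (\<lambda>xs. term_value (n xs) (t xs) (e xs))"
proof -
  have "computes (Suc (Suc (Suc 0))) (Prim Z r_value_step) (\<lambda>xs. value_history (xs ! 1) (xs ! 2) (xs ! 0))"
    by (rule computes_Prim[OF computes_Z computes_value_step]) (auto simp: length_Suc_conv)
  from computes_decode_fst[OF computes_Comp3[OF this computes_S[OF assms(3)] assms(1,2)]] show ?thesis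
    unfolding r_term_value_def term_value_def by simp
qed

section \<open>Codes of Diophantine equations\<close>

lemma inj_enc: "inj enc"
proof (rule injI)
  show "enc D1 = enc D2 \<Longrightarrow> D1 = D2" for D1 D2
  proof (induction D1 arbitrary: D2)
    case (Var i) then show ?case by (cases D2) (simp_all, presburger+)
  next
    case (Const c) then show ?case by (cases D2) (simp_all add: int_encode_eq, presburger+)
  next
    case (Add a b) then show ?case by (cases D2) (simp_all, presburger+)
  next
    case (Mul a b) then show ?case by (cases D2) (simp_all, presburger+)
  qed
qed

lemma surj_enc: "surj enc"
proof -
  have "\<exists>D. enc D = e" for e
  proof (induction e rule: less_induct)
    case (less e)
    let ?j = "e div 4"
    obtain a b where ab: "?j = prod_encode (a, b)" by (metis prod_decode_inverse surj_pair)
    have "a < e" "b < e" if "2 \<le> e mod 4"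
      using that ab le_prod_encode_1[of a b] le_prod_encode_2[of b a] by linarith+
    then obtain Da Db where "2 \<le> e mod 4 \<Longrightarrow> enc Da = a \<and> enc Db = b" using less by metis
    moreover have "e = 4 * ?j + e mod 4" by simp
    moreover have "e mod 4 = 0 \<or> e mod 4 = 1 \<or> e mod 4 = 2 \<or> e mod 4 = 3" by linarith
    ultimately have "enc (Var ?j) = e \<or> enc (Const (int_decode ?j)) = e \<or> enc (Add Da Db) = e \<or>
        enc (Mul Da Db) = e"
      using ab by (elim disjE) simp_all
    then show ?case by blast
  qed
  then show ?thesis by (metis surjI)
qed

lemma code_decompose: obtains D where "x = prod_encode (decode_fst x, enc D)"
  by (metis prod_encode_decode surj_enc surjD)

lemma Solvable_code_iff:
  "prod_encode (n, enc D) \<in> Solvable \<longleftrightarrow> dioph_eq n D \<and> solutions n D \<noteq> {}"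
  using inj_enc by (auto simp: Solvable_def code_def dest: injD)

lemma FinitelySolvable_code_iff:
  "prod_encode (n, enc D) \<in> FinitelySolvable \<longleftrightarrow> dioph_eq n D \<and> finite (solutions n D)"
  using inj_enc by (auto simp: FinitelySolvable_def code_def dest: injD)

lemma dval_cong: "(\<And>i. i \<in> vars D \<Longrightarrow> x i = y i) \<Longrightarrow> dval x D = dval y D"
  by (induction D) auto

lemma finite_solutions_Suc_iff:
  assumes "dioph_eq n D" shows "finite (solutions (Suc n) D) \<longleftrightarrow> solutions n D = {}"
proof
  assume fin: "finite (solutions (Suc n) D)"
  show "solutions n D = {}"
  proof (rule ccontr)
    assume "solutions n D \<noteq> {}"
    then obtain y where y: "y \<in> solutions n D" by auto
    have "dval (y(n := m)) D = dval y D" for m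
      by (rule dval_cong) (use assms in \<open>auto simp: dioph_eq_def\<close>)
    then have "range (\<lambda>m. y(n := m)) \<subseteq> solutions (Suc n) D" using y by (auto simp: solutions_def)
    moreover have "inj (\<lambda>m. y(n := m))" by (rule injI) (drule fun_cong[of _ _ n], simp)
    ultimately show False using fin by (meson finite_imageD finite_subset infinite_UNIV_nat)
  qed
next
  assume none: "solutions n D = {}"
  have "z(n := 0) \<in> solutions n D" if "z \<in> solutions (Suc n) D" for z
  proof -
    have "dval (z(n := 0)) D = dval z D"
      by (rule dval_cong) (use assms in \<open>auto simp: dioph_eq_def\<close>)
    with that show ?thesis by (auto simp: solutions_def)
  qed
  with none have "solutions (Suc n) D = {}" by blast
  then show "finite (solutions (Suc n) D)" by simp
qed

lemma coord_prod_encode_0 [simp]: "coord (prod_encode (a, t)) 0 = a"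
  and coord_prod_encode_Suc [simp]: "coord (prod_encode (a, t)) (Suc i) = coord t i"
  by (simp_all add: coord_def funpow_Suc_right del: funpow.simps)

lemma coord_interpolate: "\<exists>t. \<forall>i<n. coord t i = y i"
proof (induction n arbitrary: y)
  case (Suc n)
  obtain t where t: "\<forall>i<n. coord t i = y (Suc i)" using Suc[of "\<lambda>i. y (Suc i)"] by blast
  have "coord (prod_encode (y 0, t)) i = y i" if "i < Suc n" for i
    using that t by (cases i) auto
  then show ?case by blast
qed simp

lemma solutions_nonempty_iff: "solutions n D \<noteq> {} \<longleftrightarrow> (\<exists>t. dval (assignment n t) D = 0)"
proof
  assume "solutions n D \<noteq> {}"
  then obtain y where y: "y \<in> solutions n D" by auto
  obtain t where "\<forall>i<n. coord t i = y i" using coord_interpolate by blast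
  then have "assignment n t = y" using y by (auto simp: assignment_def solutions_def)
  with y show "\<exists>t. dval (assignment n t) D = 0" by (auto simp: solutions_def)
next
  assume "\<exists>t. dval (assignment n t) D = 0"
  then obtain t where "dval (assignment n t) D = 0" ..
  then have "assignment n t \<in> solutions n D" by (simp add: solutions_def assignment_def)
  then show "solutions n D \<noteq> {}" by blast
qed

definition solvable_test :: "nat \<Rightarrow> nat \<Rightarrow> nat" where
  "solvable_test s x = (let v = term_value (decode_fst x) s (decode_snd x) in
     triple_flag v + (triple_pos v - triple_neg v) + (triple_neg v - triple_pos v))"

definition unsolvable_test :: "recf \<Rightarrow> nat \<Rightarrow> nat \<Rightarrow> nat" where
  "unsolvable_test f s x = (if triple_flag (term_value (decode_fst x) s (decode_snd x)) = 0
     \<and> eval_clocked f s [prod_encode (Suc (decode_fst x), decode_snd x)] = None then 1 else 0)"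

lemma solvable_test_code:
  "solvable_test s (prod_encode (n, enc D)) = 0 \<longleftrightarrow> dioph_eq n D \<and> dval (assignment n s) D = 0"
  using term_value_enc[of n s D] by (auto simp: solvable_test_def dioph_eq_def Let_def)

lemma unsolvable_test_code:
  "unsolvable_test f s (prod_encode (n, enc D)) = 0 \<longleftrightarrow>
   \<not> dioph_eq n D \<or> (\<exists>y. eval_clocked f s [prod_encode (Suc n, enc D)] = Some y)"
  using term_value_enc[of n s D] by (auto simp: unsolvable_test_def dioph_eq_def)

lemma Solvable_iff_solvable_test: "x \<in> Solvable \<longleftrightarrow> (\<exists>s. solvable_test s x = 0)"
proof -
  obtain D where x: "x = prod_encode (decode_fst x, enc D)" by (rule code_decompose)
  show ?thesis
    by (subst (1 2) x) (auto simp: Solvable_code_iff solvable_test_code solutions_nonempty_iff)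
qed

lemma not_Solvable_iff_unsolvable_test:
  assumes f: "\<And>x. x \<in> FinitelySolvable \<longleftrightarrow> (\<exists>y. eval f [x] y)"
  shows "x \<notin> Solvable \<longleftrightarrow> (\<exists>s. unsolvable_test f s x = 0)"
proof -
  obtain D where x: "x = prod_encode (decode_fst x, enc D)" by (rule code_decompose)
  let ?n = "decode_fst x"
  have "(\<exists>s. unsolvable_test f s x = 0) \<longleftrightarrow>
      \<not> dioph_eq ?n D \<or> prod_encode (Suc ?n, enc D) \<in> FinitelySolvable"
    by (subst x) (auto simp: unsolvable_test_code f eval_iff_eval_clocked)
  also have "\<dots> \<longleftrightarrow> \<not> dioph_eq ?n D \<or> solutions ?n D = {}"
    using finite_solutions_Suc_iff[of ?n D]
    by (auto simp: FinitelySolvable_code_iff dioph_eq_def)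
  also have "\<dots> \<longleftrightarrow> x \<notin> Solvable"
    by (subst (2) x) (auto simp: Solvable_code_iff)
  finally show ?thesis ..
qed

definition r_term_value_of_code :: recf where
  "r_term_value_of_code = r_term_value (r_decode_fst (Proj 1)) (Proj 0) (r_decode_snd (Proj 1))"

lemma computes_term_value_of_code:
  "computes (Suc (Suc 0)) r_term_value_of_code
     (\<lambda>zs. term_value (decode_fst (zs ! 1)) (zs ! 0) (decode_snd (zs ! 1)))"
  unfolding r_term_value_of_code_def
  by (intro computes_term_value computes_decode_fst computes_decode_snd computes_Proj) simp_all

definition r_solvable_test :: recf where
  "r_solvable_test = (let
     V = r_term_value_of_code;
     P = r_decode_fst V; N = r_decode_fst (r_decode_snd V); B = r_decode_snd (r_decode_snd V)
   in r_add (r_add B (r_sub P N)) (r_sub N P))"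

lemma computes_solvable_test:
  "computes (Suc (Suc 0)) r_solvable_test (\<lambda>zs. solvable_test (zs ! 0) (zs ! 1))"
  unfolding r_solvable_test_def Let_def
  by (rule computes_cong, (rule computes_add computes_sub computes_decode_fst computes_decode_snd
      computes_term_value_of_code)+)
    (simp add: solvable_test_def Let_def triple_pos_def triple_neg_def triple_flag_def)

definition r_unsolvable_test :: "recf \<Rightarrow> recf" where
  "r_unsolvable_test f = r_cond (r_decode_snd (r_decode_snd r_term_value_of_code))
     (r_sub (r_const 1)
       (Comp (r_clocked f (Suc 0)) [Proj 0, r_prod_encode (Comp S [r_decode_fst (Proj 1)]) (r_decode_snd (Proj 1))]))
     Z"

lemma computes_unsolvable_test:
  "computes (Suc (Suc 0)) (r_unsolvable_test f) (\<lambda>zs. unsolvable_test f (zs ! 0) (zs ! 1))"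
  unfolding r_unsolvable_test_def
  by (rule computes_cong, (rule computes_cond computes_sub computes_const computes_Z computes_Comp2
      computes_clocked computes_prod_encode computes_S computes_decode_fst computes_decode_snd
      computes_term_value_of_code computes_Proj | simp)+)
    (auto simp: unsolvable_test_def triple_flag_def)

theorem mainTheorem12:
  assumes "\<not> recursive_set Solvable"
  shows "\<not> re_set FinitelySolvable"
proof
  assume "re_set FinitelySolvable"
  then obtain f where f: "\<And>x. x \<in> FinitelySolvable \<longleftrightarrow> (\<exists>y. eval f [x] y)"
    unfolding re_set_def by blast
  have "recursive_set Solvable"
    by (rule recursive_setI_two_searches[OF computes_solvable_test computes_unsolvable_test
          Solvable_iff_solvable_test not_Solvable_iff_unsolvable_test[OF f]])
  with assms show False by contradiction
qed

end
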